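(* Let $H$ be a traceless hermitian $5\times 5$ matrix with pairwise distinct eigenvalues $\lambda_1,\dots,\lambda_5$, let $C(z)=\prod_{k=1}^5(z-\lambda_k)$, and let $F_5(t)=\sum_{k=1}^5 \exp(i\lambda_k t)/C'(\lambda_k)$. Then for all real $t$, $$\exp(itH)=\Big[H^4-iH^3\frac{d}{dt}-H^2\Big(\tfrac12\operatorname{tr}(H^2)+\frac{d^2}{dt^2}\Big)+H\Big(-\tfrac13\operatorname{tr}(H^3)+\tfrac12 i\operatorname{tr}(H^2)\frac{d}{dt}+i\frac{d^3}{dt^3}\Big)$$ $$+I\Big(\tfrac18(\operatorname{tr}(H^2))^2-\tfrac14\operatorname{tr}(H^4)+\tfrac13\operatorname{tr}(H^3)\,i\frac{d}{dt}+\tfrac12\operatorname{tr}(H^2)\frac{d^2}{dt^2}+\frac{d^4}{dt^4}\Big)\Big]F_5(t).$$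
   Context: $I$ is the $5\times5$ identity matrix; a matrix coefficient multiplying a differential operator means the operator is applied to $F_5(t)$ and the result multiplies the matrix. *)

theory Defs
  imports "HOL-Analysis.Analysis" "HOL-Computational_Algebra.Polynomial" "HOL-Library.Numeral_Type"
begin

type_synonym cmat5 = "complex^5^5"

definition mpow :: "complex^'n^'n \<Rightarrow> nat \<Rightarrow> complex^'n^'n" where
  "mpow A n = ((\<lambda>B. A ** B) ^^ n) (mat 1)"

definition mexp :: "complex^'n^'n \<Rightarrow> complex^'n^'n" where
  "mexp A = (\<chi> i j. \<Sum>n. mpow A n $ i $ j / of_nat (fact n))"

definition msc :: "complex \<Rightarrow> complex^'n^'n \<Rightarrow> complex^'n^'n" where
  "msc c A = (\<chi> i j. c * A $ i $ j)"

definition hermitian :: "complex^'n^'n \<Rightarrow> bool" where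
  "hermitian A \<longleftrightarrow> (\<forall>i j. A $ i $ j = cnj (A $ j $ i))"

definition nderiv :: "nat \<Rightarrow> (real \<Rightarrow> complex) \<Rightarrow> real \<Rightarrow> complex" where
  "nderiv n f = ((\<lambda>g t. vector_derivative g (at t)) ^^ n) f"

definition charC :: "(5 \<Rightarrow> real) \<Rightarrow> complex poly" where
  "charC lam = (\<Prod>k\<in>UNIV. [:- complex_of_real (lam k), 1:])"

definition F5 :: "(5 \<Rightarrow> real) \<Rightarrow> real \<Rightarrow> complex" where
  "F5 lam t = (\<Sum>k\<in>UNIV. exp (\<i> * complex_of_real (lam k * t)) /
                 poly (pderiv (charC lam)) (complex_of_real (lam k)))"

end

theory Submission
  imports Defs
begin

text \<open>Since the eigenvalues \<open>\<lambda>\<^sub>k\<close> of \<open>H\<close> are distinct, \<open>H\<close> is diagonalizable, so it suffices to check the identity on each eigenvalue \<open>x = \<lambda>\<^sub>a\<close>. Put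
\<open>Q(x,y) = (C(x) - C(y))/(x - y)\<close>: then \<open>Q(\<lambda>\<^sub>a,\<lambda>\<^sub>k)\<close> vanishes for \<open>k \<noteq> a\<close> and equals \<open>C'(\<lambda>\<^sub>a)\<close> for
\<open>k = a\<close>, which is Lagrange interpolation:
\<open>exp(i t \<lambda>\<^sub>a) = \<Sum>\<^sub>k exp(i t \<lambda>\<^sub>k) / C'(\<lambda>\<^sub>k) \<cdot> Q(\<lambda>\<^sub>a,\<lambda>\<^sub>k)\<close>.
Since \<open>tr H = 0\<close>, Newton's identities express the coefficients of \<open>C\<close>, hence of \<open>Q\<close>, through
\<open>tr H\<^sup>2, tr H\<^sup>3, tr H\<^sup>4\<close>; expanding \<open>Q(x,\<lambda>\<^sub>k)\<close> in powers of \<open>\<lambda>\<^sub>k\<close> and using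
\<open>\<Sum>\<^sub>k \<lambda>\<^sub>k\<^sup>m exp(i t \<lambda>\<^sub>k) / C'(\<lambda>\<^sub>k) = (-i d/dt)\<^sup>m F\<^sub>5(t)\<close> gives the stated operator.\<close>

section \<open>Derivatives of exponential sums\<close>

lemma has_vector_derivative_exp_i_mult:
  "((\<lambda>t::real. exp (\<i> * complex_of_real (a * t))) has_vector_derivative \<i> * a * exp (\<i> * complex_of_real (a * t))) (at t)"
  by (auto intro!: derivative_eq_intros has_vector_derivative_real_field simp: mult_ac)

lemma nderiv_Suc: "nderiv (Suc m) f = (\<lambda>t. vector_derivative (nderiv m f) (at t))"
  by (simp add: nderiv_def)

lemma nderiv_exp_sum:
  fixes l :: "'a::finite \<Rightarrow> real" and d :: "'a \<Rightarrow> complex"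
  shows "nderiv m (\<lambda>t. \<Sum>k\<in>UNIV. exp (\<i> * complex_of_real (l k * t)) / d k) =
    (\<lambda>t. \<Sum>k\<in>UNIV. (\<i> * complex_of_real (l k))^m * exp (\<i> * complex_of_real (l k * t)) / d k)"
proof (induction m)
  case 0
  show ?case by (simp add: nderiv_def)
next
  case (Suc m)
  have "((\<lambda>t. \<Sum>k\<in>UNIV. (\<i> * complex_of_real (l k))^m * exp (\<i> * complex_of_real (l k * t)) / d k)
        has_vector_derivative (\<Sum>k\<in>UNIV. (\<i> * complex_of_real (l k))^m * (\<i> * complex_of_real (l k) * exp (\<i> * complex_of_real (l k * t))) / d k)) (at t)" for t
    by (intro has_vector_derivative_sum has_vector_derivative_divide
        has_vector_derivative_mult_right has_vector_derivative_exp_i_mult)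
  then show ?case
    unfolding nderiv_Suc Suc.IH by (simp add: vector_derivative_at fun_eq_iff mult_ac)
qed

section \<open>Interpolation at the roots of \<open>C\<close>\<close>

lemma poly_pderiv_linear_factors_at_root:
  fixes L :: "'a \<Rightarrow> 'b::idom"
  assumes "finite A" and "a \<in> A"
  shows "poly (pderiv (\<Prod>k\<in>A. [:- L k, 1:])) (L a) = (\<Prod>m\<in>A - {a}. L a - L m)"
proof -
  have "poly (pderiv (\<Prod>k\<in>A. [:- L k, 1:])) (L a) = (\<Sum>j\<in>A. \<Prod>m\<in>A - {j}. L a - L m)"
    by (simp add: pderiv_prod poly_sum poly_prod pderiv_pCons)
  also have "\<dots> = (\<Prod>m\<in>A - {a}. L a - L m)"
    using assms by (subst sum.remove[OF assms]) (auto intro!: sum.neutral prod_zero)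
  finally show ?thesis .
qed

lemma sum_over_roots_difference_quotient:
  fixes L :: "'a::finite \<Rightarrow> 'b::field" and Q :: "'b \<Rightarrow> 'b \<Rightarrow> 'b"
  assumes "inj L"
    and C: "C = (\<Prod>k\<in>UNIV. [:- L k, 1:])"
    and quotient: "\<And>x y. (x - y) * Q x y = poly C x - poly C y"
    and diagonal: "\<And>y. Q y y = poly (pderiv C) y"
  shows "(\<Sum>k\<in>UNIV. E k / poly (pderiv C) (L k) * Q (L a) (L k)) = E a"
proof -
  have root: "poly C (L k) = 0" for k
    unfolding C poly_prod by (rule prod_zero) auto
  have "Q (L a) (L k) = 0" if "k \<noteq> a" for k
  proof -
    have "(L a - L k) * Q (L a) (L k) = 0" using quotient root by simp
    with \<open>inj L\<close> that show ?thesis by (auto dest: injD)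
  qed
  moreover have "poly (pderiv C) (L a) \<noteq> 0"
    using \<open>inj L\<close> poly_pderiv_linear_factors_at_root[of UNIV a L]
    by (auto simp: C dest: injD)
  ultimately show ?thesis
    by (subst sum.remove[of UNIV a]) (auto intro!: sum.neutral simp: diagonal)
qed

text \<open>By Newton's identities, the monic quintic whose roots have power sums \<open>0, p2, p3, p4\<close> and
  product \<open>c0\<close>; \<open>quintic_quotient\<close> is its difference quotient \<open>(C(x) - C(y))/(x - y)\<close>.\<close>

definition traceless_quintic :: "complex \<Rightarrow> complex \<Rightarrow> complex \<Rightarrow> complex \<Rightarrow> complex poly" where
  "traceless_quintic p2 p3 p4 c0 = [:- c0, p2\<^sup>2 / 8 - p4 / 4, - p3 / 3, - p2 / 2, 0, 1:]"

definition quintic_quotient :: "complex \<Rightarrow> complex \<Rightarrow> complex \<Rightarrow> complex \<Rightarrow> complex \<Rightarrow> complex" where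
  "quintic_quotient p2 p3 p4 x y =
     (x^4 - p2/2 * x^2 - p3/3 * x + p2\<^sup>2/8 - p4/4) + (x^3 - p2/2 * x - p3/3) * y
   + (x^2 - p2/2) * y^2 + x * y^3 + y^4"

lemma sum_quintic_quotient:
  "(\<Sum>k\<in>A. s k * quintic_quotient p2 p3 p4 x (y k)) =
     (x^4 - p2/2 * x^2 - p3/3 * x + p2\<^sup>2/8 - p4/4) * (\<Sum>k\<in>A. s k)
   + (x^3 - p2/2 * x - p3/3) * (\<Sum>k\<in>A. s k * y k) + (x^2 - p2/2) * (\<Sum>k\<in>A. s k * y k ^ 2)
   + x * (\<Sum>k\<in>A. s k * y k ^ 3) + (\<Sum>k\<in>A. s k * y k ^ 4)"
  by (simp add: quintic_quotient_def distrib_left sum.distrib sum_distrib_left sum_distrib_right mult_ac)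

lemma quintic_quotient_diff:
  "(x - y) * quintic_quotient p2 p3 p4 x y =
     poly (traceless_quintic p2 p3 p4 c0) x - poly (traceless_quintic p2 p3 p4 c0) y"
  unfolding quintic_quotient_def traceless_quintic_def by simp algebra

lemma quintic_quotient_diagonal:
  "quintic_quotient p2 p3 p4 y y = poly (pderiv (traceless_quintic p2 p3 p4 c0)) y"
  unfolding quintic_quotient_def traceless_quintic_def by (simp add: pderiv_pCons) algebra

lemma poly_traceless_quintic:
  "poly (traceless_quintic p2 p3 p4 c0) z = z^5 - p2/2 * z^3 - p3/3 * z^2 + (p2\<^sup>2/8 - p4/4) * z - c0"
  unfolding traceless_quintic_def by (simp add: algebra_simps power_numeral_reduce)

lemma newton_quintic:
  fixes a b c d e z :: complex
  assumes "a + b + c + d + e = 0"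
  shows "(z - a) * (z - b) * (z - c) * (z - d) * (z - e) =
    poly (traceless_quintic (a^2 + b^2 + c^2 + d^2 + e^2) (a^3 + b^3 + c^3 + d^3 + e^3)
      (a^4 + b^4 + c^4 + d^4 + e^4) (a * b * c * d * e)) z"
proof -
  have e: "e = - (a + b + c + d)" using assms by (simp add: eq_neg_iff_add_eq_0 algebra_simps)
  show ?thesis unfolding poly_traceless_quintic e by (simp add: field_simps) algebra
qed

lemma exhaust_5:
  fixes x :: 5
  shows "x = 1 \<or> x = 2 \<or> x = 3 \<or> x = 4 \<or> x = 5"
proof (induct x)
  case (of_int z)
  then have "z = 0 \<or> z = 1 \<or> z = 2 \<or> z = 3 \<or> z = 4" by fastforce
  then show ?case by auto
qed

lemma UNIV_5: "(UNIV :: 5 set) = {1, 2, 3, 4, 5}"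
  using exhaust_5 by auto

lemma sum_UNIV_5: "sum f (UNIV :: 5 set) = f 1 + f 2 + f 3 + f 4 + f 5"
  unfolding UNIV_5 by (simp add: algebra_simps)

lemma prod_UNIV_5: "prod f (UNIV :: 5 set) = f 1 * f 2 * f 3 * f 4 * f 5"
  unfolding UNIV_5 by (simp add: algebra_simps)

lemma charC_traceless:
  fixes lam :: "5 \<Rightarrow> real"
  assumes "(\<Sum>k\<in>UNIV. complex_of_real (lam k)) = 0"
  shows "charC lam = traceless_quintic (\<Sum>k\<in>UNIV. complex_of_real (lam k) ^ 2)
    (\<Sum>k\<in>UNIV. complex_of_real (lam k) ^ 3) (\<Sum>k\<in>UNIV. complex_of_real (lam k) ^ 4)
    (\<Prod>k\<in>UNIV. complex_of_real (lam k))"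
proof -
  have linear: "poly [:- c, 1:] x = x - c" for c x :: complex
    by simp
  show ?thesis
    unfolding poly_eq_poly_eq_iff[symmetric] charC_def fun_eq_iff poly_prod linear
    by (simp only: sum_UNIV_5 prod_UNIV_5) (intro allI newton_quintic[OF assms[unfolded sum_UNIV_5]])
qed

lemma nderiv_F5:
  "nderiv m (F5 lam) t = \<i>^m * (\<Sum>k\<in>UNIV. exp (\<i> * complex_of_real (lam k * t)) /
      poly (pderiv (charC lam)) (complex_of_real (lam k)) * complex_of_real (lam k) ^ m)"
  unfolding F5_def nderiv_exp_sum
  by (simp add: sum_distrib_left power_mult_distrib mult_ac)

lemma exp_eigenvalue_expansion:
  fixes lam :: "5 \<Rightarrow> real" and t :: real and a :: 5
  assumes "inj lam" and "(\<Sum>k\<in>UNIV. complex_of_real (lam k)) = 0"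
  defines "x \<equiv> complex_of_real (lam a)" and "D \<equiv> \<lambda>m. nderiv m (F5 lam) t"
    and "p2 \<equiv> \<Sum>k\<in>UNIV. complex_of_real (lam k) ^ 2"
    and "p3 \<equiv> \<Sum>k\<in>UNIV. complex_of_real (lam k) ^ 3"
    and "p4 \<equiv> \<Sum>k\<in>UNIV. complex_of_real (lam k) ^ 4"
  shows "exp (\<i> * complex_of_real t * x) =
      D 0 * x ^ 4 - \<i> * D 1 * x ^ 3 - (p2 / 2 * D 0 + D 2) * x ^ 2
    + (- p3 / 3 * D 0 + \<i> * p2 / 2 * D 1 + \<i> * D 3) * x
    + (p2\<^sup>2 / 8 * D 0 - p4 / 4 * D 0 + p3 / 3 * \<i> * D 1 + p2 / 2 * D 2 + D 4)"
proof -
  define L where "L k = complex_of_real (lam k)" for k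
  define s where "s k = exp (\<i> * complex_of_real t * L k) / poly (pderiv (charC lam)) (L k)" for k
  have injL: "inj L" using \<open>inj lam\<close> by (simp add: L_def inj_def)
  have C: "charC lam = traceless_quintic p2 p3 p4 (\<Prod>k\<in>UNIV. L k)"
    unfolding L_def p2_def p3_def p4_def by (rule charC_traceless[OF assms(2)])
  have interpolation: "(\<Sum>k\<in>UNIV. s k * quintic_quotient p2 p3 p4 (L a) (L k)) = exp (\<i> * complex_of_real t * L a)"
    unfolding s_def
  proof (rule sum_over_roots_difference_quotient[OF injL])
    show "charC lam = (\<Prod>k\<in>UNIV. [:- L k, 1:])" by (simp add: charC_def L_def)
  qed (simp_all only: C quintic_quotient_diff quintic_quotient_diagonal)
  have D: "D m = \<i> ^ m * (\<Sum>k\<in>UNIV. s k * L k ^ m)" for m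
    unfolding D_def nderiv_F5 s_def L_def by (simp add: mult_ac)
  have "\<i> * \<i> = -1" by simp
  then show ?thesis
    unfolding x_def L_def[symmetric] D interpolation[symmetric] sum_quintic_quotient power_0 mult_1_right power_one_right
    by algebra
qed

section \<open>Diagonalization\<close>

definition diag_mat :: "('n::finite \<Rightarrow> complex) \<Rightarrow> complex^'n^'n" where
  "diag_mat \<mu> = (\<chi> i j. if i = j then \<mu> i else 0)"

definition column_matrix :: "('n::finite \<Rightarrow> complex^'n) \<Rightarrow> complex^'n^'n" where
  "column_matrix v = (\<chi> i k. v k $ i)"

lemma diag_mat_1: "diag_mat (\<lambda>k. 1) = mat 1"
  by (simp add: diag_mat_def mat_def)

lemma matrix_mul_diag_mat_nth: "(V ** diag_mat \<mu>) $ i $ k = V $ i $ k * \<mu> k"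
proof -
  have "(V ** diag_mat \<mu>) $ i $ k = (\<Sum>j\<in>UNIV. if j = k then V $ i $ j * \<mu> j else 0)"
    unfolding diag_mat_def matrix_matrix_mult_def
    by (simp only: vec_lambda_beta) (rule sum.cong[OF refl], simp)
  then show ?thesis by simp
qed

lemma diag_mat_mult: "diag_mat \<mu> ** diag_mat \<nu> = diag_mat (\<lambda>k. \<mu> k * \<nu> k)"
  by (simp add: vec_eq_iff matrix_mul_diag_mat_nth) (simp add: diag_mat_def)

lemma conj_diag_mat_nth: "(V ** diag_mat \<mu> ** B) $ i $ j = (\<Sum>a\<in>UNIV. V $ i $ a * \<mu> a * B $ a $ j)"
  by (simp add: matrix_matrix_mult_def[of "V ** diag_mat \<mu>"] matrix_mul_diag_mat_nth)

lemma msc_conj_diag_mat: "msc c (V ** diag_mat \<mu> ** B) = V ** diag_mat (\<lambda>k. c * \<mu> k) ** B"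
  by (simp add: vec_eq_iff msc_def conj_diag_mat_nth sum_distrib_left mult_ac)

lemma add_conj_diag_mat:
  "V ** diag_mat \<mu> ** B + V ** diag_mat \<nu> ** B = V ** diag_mat (\<lambda>k. \<mu> k + \<nu> k) ** B"
  by (simp add: vec_eq_iff conj_diag_mat_nth sum.distrib[symmetric] algebra_simps)

lemma trace_conj_diag_mat:
  assumes "B ** V = mat 1"
  shows "trace (V ** diag_mat \<mu> ** B) = (\<Sum>k\<in>UNIV. \<mu> k)"
proof -
  have "trace (V ** diag_mat \<mu> ** B) = trace (B ** (V ** diag_mat \<mu>))" by (rule trace_mul_sym)
  also have "\<dots> = (\<Sum>k\<in>UNIV. \<mu> k)"
    by (simp add: matrix_mul_assoc assms trace_def diag_mat_def)
  finally show ?thesis .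
qed

lemma msc_mult_vec: "msc c A *v x = c *s (A *v x)"
  by (simp add: vec_eq_iff msc_def matrix_vector_mult_def sum_distrib_left mult_ac)

lemma matrix_mul_column_matrix_eigenvectors:
  assumes "\<And>k. A *v v k = \<mu> k *s v k"
  shows "A ** column_matrix v = column_matrix v ** diag_mat \<mu>"
proof -
  have "(A ** column_matrix v) $ i $ k = (A *v v k) $ i" for i k
    by (simp add: column_matrix_def matrix_matrix_mult_def matrix_vector_mult_def)
  then show ?thesis
    by (simp add: vec_eq_iff matrix_mul_diag_mat_nth assms column_matrix_def mult.commute)
qed

lemma mpow_1: "mpow A 1 = A"
  by (simp add: mpow_def)

lemma mpow_mult_eigenbasis:
  assumes "A ** V = V ** diag_mat \<mu>"
  shows "mpow A n ** V = V ** diag_mat (\<lambda>k. \<mu> k ^ n)"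
proof (induction n)
  case 0
  show ?case by (simp add: mpow_def diag_mat_1)
next
  case (Suc n)
  have "mpow A (Suc n) ** V = A ** (mpow A n ** V)" by (simp add: mpow_def matrix_mul_assoc)
  also have "\<dots> = (A ** V) ** diag_mat (\<lambda>k. \<mu> k ^ n)" by (simp add: Suc matrix_mul_assoc)
  also have "\<dots> = V ** (diag_mat \<mu> ** diag_mat (\<lambda>k. \<mu> k ^ n))" by (simp add: assms matrix_mul_assoc)
  also have "\<dots> = V ** diag_mat (\<lambda>k. \<mu> k ^ Suc n)" by (simp add: diag_mat_mult)
  finally show ?case .
qed

lemma mpow_conj_diag_mat:
  assumes "A ** V = V ** diag_mat \<mu>" and "V ** B = mat 1"
  shows "mpow A n = V ** diag_mat (\<lambda>k. \<mu> k ^ n) ** B"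
  by (metis assms mpow_mult_eigenbasis matrix_mul_assoc matrix_mul_rid)

lemma mexp_conj_diag_mat:
  assumes "A ** V = V ** diag_mat \<mu>" and "V ** B = mat 1"
  shows "mexp A = V ** diag_mat (\<lambda>k. exp (\<mu> k)) ** B"
proof -
  have exp_sums: "(\<lambda>n. z ^ n / of_nat (fact n)) sums exp z" for z :: complex
    using exp_converges[of z] by (simp add: scaleR_conv_of_real divide_inverse mult.commute)
  have "(\<lambda>n. mpow A n $ i $ j / of_nat (fact n)) sums (V ** diag_mat (\<lambda>k. exp (\<mu> k)) ** B) $ i $ j" for i j
  proof -
    have "(\<lambda>n. \<Sum>a\<in>UNIV. V $ i $ a * B $ a $ j * (\<mu> a ^ n / of_nat (fact n)))
        sums (\<Sum>a\<in>UNIV. V $ i $ a * B $ a $ j * exp (\<mu> a))"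
      by (intro sums_sum sums_mult exp_sums)
    then show ?thesis
      by (simp add: mpow_conj_diag_mat[OF assms] conj_diag_mat_nth sum_divide_distrib mult_ac)
  qed
  then show ?thesis unfolding mexp_def by (simp add: vec_eq_iff sums_iff)
qed

lemma column_matrix_eigenvectors_left_invertible:
  fixes A :: "complex^'n::finite^'n"
  assumes nonzero: "\<And>k. v k \<noteq> 0" and eigen: "\<And>k. A *v v k = \<mu> k *s v k" and "inj \<mu>"
  shows "\<exists>B. B ** column_matrix v = mat 1"
  unfolding matrix_left_invertible_ker
proof (intro allI impI)
  fix c assume Vc: "column_matrix v *v c = 0"
  have power_comb: "(\<Sum>k\<in>UNIV. v k $ i * \<mu> k ^ n * c $ k) = 0" for i n
  proof -
    have "(column_matrix v ** diag_mat (\<lambda>k. \<mu> k ^ n)) *v c = mpow A n *v (column_matrix v *v c)"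
      unfolding mpow_mult_eigenbasis[OF matrix_mul_column_matrix_eigenvectors[OF eigen], symmetric]
      by (simp add: matrix_vector_mul_assoc)
    then show ?thesis
      using Vc by (simp add: vec_eq_iff matrix_vector_mult_def matrix_mul_diag_mat_nth column_matrix_def)
  qed
  have poly_comb: "(\<Sum>k\<in>UNIV. v k $ i * poly p (\<mu> k) * c $ k) = 0" for i p
  proof -
    have "(\<Sum>k\<in>UNIV. v k $ i * poly p (\<mu> k) * c $ k)
        = (\<Sum>n\<le>degree p. coeff p n * (\<Sum>k\<in>UNIV. v k $ i * \<mu> k ^ n * c $ k))"
      by (simp add: poly_altdef sum_distrib_left sum_distrib_right mult_ac sum.swap[of _ UNIV])
    then show ?thesis by (simp add: power_comb)
  qed
  show "c = 0"
  proof (rule vec_eq_iff[THEN iffD2, rule_format])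
    fix j
    \<comment> \<open>a polynomial vanishing at every eigenvalue except \<open>\<mu> j\<close> isolates the \<open>j\<close>-th coefficient\<close>
    define p where "p = (\<Prod>m\<in>UNIV-{j}. [:- \<mu> m, 1:])"
    have "poly p (\<mu> k) = 0" if "k \<noteq> j" for k
      unfolding p_def poly_prod by (rule prod_zero) (use that in auto)
    moreover have "poly p (\<mu> j) \<noteq> 0"
      unfolding p_def poly_prod using \<open>inj \<mu>\<close> by (auto dest: injD)
    moreover obtain i where "v j $ i \<noteq> 0" using nonzero[of j] by (auto simp: vec_eq_iff)
    moreover have "(\<Sum>k\<in>UNIV. v k $ i * poly p (\<mu> k) * c $ k) = v j $ i * poly p (\<mu> j) * c $ j"
      using calculation(1) by (subst sum.remove[of UNIV j]) (auto intro!: sum.neutral)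
    ultimately show "c $ j = 0 $ j" using poly_comb by simp
  qed
qed

lemma eigenvectors_diagonalize:
  fixes A :: "complex^'n::finite^'n"
  assumes "\<And>k. v k \<noteq> 0" and "\<And>k. A *v v k = \<mu> k *s v k" and "inj \<mu>"
  obtains B where "A ** column_matrix v = column_matrix v ** diag_mat \<mu>"
    and "B ** column_matrix v = mat 1" and "column_matrix v ** B = mat 1"
  using column_matrix_eigenvectors_left_invertible[OF assms] matrix_left_right_inverse
    matrix_mul_column_matrix_eigenvectors[of A v \<mu>] assms(2) by blast

theorem mainTheorem3:
  fixes H :: "complex^5^5" and lam :: "5 \<Rightarrow> real" and t :: real
  assumes "hermitian H"
    and "trace H = 0"
    and "inj lam"
    and "\<forall>k. \<exists>v. v \<noteq> 0 \<and> H *v v = complex_of_real (lam k) *s v"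
  shows "mexp (msc (\<i> * complex_of_real t) H) =
     msc (nderiv 0 (F5 lam) t) (mpow H 4)
   + msc (- \<i> * nderiv 1 (F5 lam) t) (mpow H 3)
   + msc (- (trace (mpow H 2) / 2 * nderiv 0 (F5 lam) t + nderiv 2 (F5 lam) t)) (mpow H 2)
   + msc (- trace (mpow H 3) / 3 * nderiv 0 (F5 lam) t
          + \<i> * trace (mpow H 2) / 2 * nderiv 1 (F5 lam) t
          + \<i> * nderiv 3 (F5 lam) t) H
   + msc ((trace (mpow H 2))\<^sup>2 / 8 * nderiv 0 (F5 lam) t - trace (mpow H 4) / 4 * nderiv 0 (F5 lam) t
          + trace (mpow H 3) / 3 * \<i> * nderiv 1 (F5 lam) t
          + trace (mpow H 2) / 2 * nderiv 2 (F5 lam) t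
          + nderiv 4 (F5 lam) t) (mat 1)"
proof -
  define L where "L k = complex_of_real (lam k)" for k
  from assms(4) obtain v where nonzero: "\<And>k. v k \<noteq> 0" and eigen: "\<And>k. H *v v k = L k *s v k"
    unfolding L_def by metis
  define V where "V = column_matrix v"
  have "inj L" using \<open>inj lam\<close> by (simp add: L_def inj_def)
  then obtain B where HV: "H ** V = V ** diag_mat L" and BV: "B ** V = mat 1" and VB: "V ** B = mat 1"
    using eigenvectors_diagonalize[of v H L] nonzero eigen unfolding V_def by blast
  have powers: "mpow H n = V ** diag_mat (\<lambda>k. L k ^ n) ** B" for n
    by (rule mpow_conj_diag_mat[OF HV VB])
  have traces: "trace (mpow H n) = (\<Sum>k\<in>UNIV. L k ^ n)" for n
    unfolding powers trace_conj_diag_mat[OF BV] ..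
  have "(\<Sum>k\<in>UNIV. L k) = 0" using assms(2) traces[of 1] unfolding mpow_1 by simp
  note expansion = exp_eigenvalue_expansion[OF \<open>inj lam\<close> this[unfolded L_def]]
  have exp_eq: "mexp (msc (\<i> * complex_of_real t) H) = V ** diag_mat (\<lambda>k. exp (\<i> * complex_of_real t * L k)) ** B"
    by (rule mexp_conj_diag_mat[OF _ VB])
      (simp add: V_def matrix_mul_column_matrix_eigenvectors msc_mult_vec eigen)
  have H_eq: "H = V ** diag_mat L ** B"
    using powers[of 1] unfolding mpow_1 power_one_right .
  have I_eq: "mat 1 = V ** diag_mat (\<lambda>k. 1) ** B"
    by (simp add: diag_mat_1 VB)
  show ?thesis
    unfolding exp_eq traces
    unfolding powers
    unfolding H_eq I_eq msc_conj_diag_mat add_conj_diag_mat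
    by (intro arg_cong[where f = "\<lambda>\<mu>. V ** diag_mat \<mu> ** B"] ext)
      (simp only: L_def expansion, simp add: algebra_simps)
qed

end
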